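(* Let $f,g:\mathbb{R}^n\to\mathbb{R}$ satisfy assumptions (A1)–(A4) below, let $\zeta\in[0,1)$ and $x_0\in\Omega=\{x:g(x)\le0\}$. Let $x_\zeta^\sharp=x(t^\sharp;\zeta,x_0)$ be the solution point, where $t^\sharp$ is the first time with $g(x(t^\sharp;\zeta,x_0))=0$ (so $g(x(t;\zeta,x_0))<0$ for $t<t^\sharp$). Then $$\epsilon(x_\zeta^\sharp)=\left|\frac{\nabla f(x_\zeta^\sharp)}{|\nabla f(x_\zeta^\sharp)|}+\frac{\nabla g(x_\zeta^\sharp)}{|\nabla g(x_\zeta^\sharp)|}\right|\le\sqrt{2(1-\zeta)}.$$
   Context: Assumptions: (A1) $\lim_{|x|\to\infty} f(x)=+\infty$; (A2) $\nabla f(x)\neq 0$ for all $x\in\Omega$; (A3) $\nabla g(x)\neq 0$ for all $x\in\Omega$; (A4) $f,g$ twice continuously differentiable. For $\zeta\in[0,1)$, $\mathbf{s}_\zeta(x)=-\frac{\nabla f(x)}{|\nabla f(x)|}-\zeta\frac{\nabla g(x)}{|\nabla g(x)|}$ ($|\cdot|$ Euclidean norm), and $x(t;\zeta,x_0)$ is the solution of $\frac{dx}{dt}=\mathbf{s}_\zeta(x)$, $x(0)=x_0$, on its maximal interval of existence in $E=\{x:\nabla f(x)\ne0,\nabla g(x)\ne0\}$. *)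

theory Defs
  imports "HOL-Analysis.Analysis"
begin

definition grad :: "('a::real_inner \<Rightarrow> real) \<Rightarrow> 'a \<Rightarrow> 'a" where
  "grad f x = (THE D. GDERIV f x :> D)"

definition C2 :: "('a::euclidean_space \<Rightarrow> real) \<Rightarrow> bool" where
  "C2 f \<longleftrightarrow> (\<forall>x. f differentiable (at x)) \<and>
     (\<exists>H. (\<forall>x. (grad f has_derivative H x) (at x)) \<and> (\<forall>v. continuous_on UNIV (\<lambda>x. H x v)))"

definition s_field :: "('a::euclidean_space \<Rightarrow> real) \<Rightarrow> ('a \<Rightarrow> real) \<Rightarrow> real \<Rightarrow> 'a \<Rightarrow> 'a" where
  "s_field f g \<zeta> x = - (grad f x /\<^sub>R norm (grad f x)) - \<zeta> *\<^sub>R (grad g x /\<^sub>R norm (grad g x))"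

definition E_set :: "('a::euclidean_space \<Rightarrow> real) \<Rightarrow> ('a \<Rightarrow> real) \<Rightarrow> 'a set" where
  "E_set f g = {x. grad f x \<noteq> 0 \<and> grad g x \<noteq> 0}"

definition eps_err :: "('a::euclidean_space \<Rightarrow> real) \<Rightarrow> ('a \<Rightarrow> real) \<Rightarrow> 'a \<Rightarrow> real" where
  "eps_err f g x = norm (grad f x /\<^sub>R norm (grad f x) + grad g x /\<^sub>R norm (grad g x))"

end

theory Submission
  imports Defs
begin

text \<open>Up to the first hitting time the trajectory stays in \<open>{g < 0}\<close> and
  reaches \<open>g = 0\<close> at \<open>t\<^sup>\<sharp>\<close>, so the left derivative of \<open>g \<circ> x\<close> there,
  \<open>\<langle>s\<^sub>\<zeta>, \<nabla>g\<rangle>\<close>, is nonnegative. With unit vectors \<open>u = \<nabla>f/|\<nabla>f|\<close> and \<open>v = \<nabla>g/|\<nabla>g|\<close> this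
  reads \<open>\<langle>-u - \<zeta>v, v\<rangle> \<ge> 0\<close>, i.e. \<open>\<langle>u, v\<rangle> \<le> -\<zeta>\<close>, whence \<open>|u + v|\<^sup>2 = 2 + 2\<langle>u, v\<rangle> \<le> 2(1 - \<zeta>)\<close>.\<close>

lemma GDERIV_grad:
  fixes f :: "'a::euclidean_space \<Rightarrow> real"
  assumes "f differentiable (at y)"
  shows "GDERIV f y :> grad f y"
proof -
  obtain F where F: "(f has_derivative F) (at y)"
    using assms unfolding differentiable_def by blast
  define D where "D = adjoint F 1"
  have "F = (\<lambda>h. h \<bullet> D)"
    using adjoint_works[OF has_derivative_linear[OF F], of _ 1]
    unfolding D_def by (auto simp: fun_eq_iff)
  then have D: "GDERIV f y :> D"
    using F by (simp add: gderiv_def)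
  have "D' = D" if "GDERIV f y :> D'" for D'
  proof -
    have "(\<lambda>h. h \<bullet> D') = (\<lambda>h. h \<bullet> D)"
      using has_derivative_unique that D by (auto simp: gderiv_def)
    then show ?thesis by (metis vector_eq_ldot)
  qed
  with D show ?thesis
    unfolding grad_def by (rule theI)
qed

lemma has_real_derivative_nonneg_at_right_max:
  fixes h :: "real \<Rightarrow> real"
  assumes "a < b" and "(h has_real_derivative d) (at b within {a..b})"
    and "\<forall>t\<in>{a..<b}. h t \<le> h b"
  shows "0 \<le> d"
proof -
  have "((\<lambda>t. (h t - h b) / (t - b)) \<longlongrightarrow> d) (at_left b)"
    using assms(2) at_within_Icc_at_left[OF assms(1)] by (simp add: has_field_derivative_iff)
  moreover have "eventually (\<lambda>t. 0 \<le> (h t - h b) / (t - b)) (at_left b)"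
  proof -
    have "eventually (\<lambda>t. t \<in> {a<..<b}) (at_left b)"
      using assms(1) eventually_at_left_real by blast
    then show ?thesis
      by eventually_elim (use assms(3) in \<open>auto simp: divide_nonpos_neg\<close>)
  qed
  ultimately show ?thesis
    by (rule tendsto_lowerbound) (simp add: trivial_limit_at_left_real)
qed

lemma inner_grad_velocity_nonneg_at_first_hit:
  fixes g :: "'a::euclidean_space \<Rightarrow> real" and x :: "real \<Rightarrow> 'a"
  assumes "a < b" and "g differentiable (at (x b))"
    and "(x has_vector_derivative v) (at b within {a..b})"
    and "\<forall>t\<in>{a..<b}. g (x t) \<le> g (x b)"
  shows "0 \<le> v \<bullet> grad g (x b)"
proof -
  have "(g has_derivative (\<lambda>h. h \<bullet> grad g (x b))) (at (x b) within x ` {a..b})"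
    using GDERIV_grad[OF assms(2)] by (auto simp: gderiv_def intro: has_derivative_at_withinI)
  from diff_chain_within[OF assms(3)[unfolded has_vector_derivative_def] this]
  have "((g \<circ> x) has_real_derivative (v \<bullet> grad g (x b))) (at b within {a..b})"
    by (simp add: has_field_derivative_def o_def mult.commute[of _ "v \<bullet> grad g (x b)"])
  then show ?thesis
    using has_real_derivative_nonneg_at_right_max assms(1,4) by fastforce
qed

lemma norm_add_unit_vectors_le:
  fixes u v :: "'a::real_inner"
  assumes "norm u = 1" and "norm v = 1" and "0 \<le> (- u - \<zeta> *\<^sub>R v) \<bullet> v"
  shows "norm (u + v) \<le> sqrt (2 * (1 - \<zeta>))"
proof -
  have uu: "u \<bullet> u = 1" and vv: "v \<bullet> v = 1"
    using assms(1,2) by (simp_all add: norm_eq_1)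
  then have "u \<bullet> v \<le> - \<zeta>"
    using assms(3) by (simp add: inner_diff_left)
  have "(norm (u + v))\<^sup>2 = u \<bullet> u + 2 * (u \<bullet> v) + v \<bullet> v"
    by (simp add: power2_norm_eq_inner inner_add_left inner_add_right inner_commute)
  also have "\<dots> \<le> 2 * (1 - \<zeta>)"
    using uu vv \<open>u \<bullet> v \<le> - \<zeta>\<close> by simp
  finally show ?thesis
    by (rule real_le_rsqrt)
qed

theorem theorem5p12:
  fixes f g :: "real ^ 'n \<Rightarrow> real" and \<zeta> :: real and x0 :: "real ^ 'n"
    and x :: "real \<Rightarrow> real ^ 'n" and tsharp :: real
  defines "\<Omega> \<equiv> {y. g y \<le> 0}"
  assumes A1: "filterlim f at_top at_infinity"
    and A2: "\<forall>y\<in>\<Omega>. grad f y \<noteq> 0"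
    and A3: "\<forall>y\<in>\<Omega>. grad g y \<noteq> 0"
    and A4: "C2 f" "C2 g"
    and zeta: "0 \<le> \<zeta>" "\<zeta> < 1"
    and x0: "x0 \<in> \<Omega>"
    and init: "x 0 = x0"
    and tpos: "0 < tsharp"
    and sol: "\<forall>t\<in>{0..tsharp}. x t \<in> E_set f g \<and>
                 (x has_vector_derivative s_field f g \<zeta> (x t)) (at t within {0..tsharp})"
    and first: "\<forall>t\<in>{0..<tsharp}. g (x t) < 0"
    and hit: "g (x tsharp) = 0"
  shows "eps_err f g (x tsharp) \<le> sqrt (2 * (1 - \<zeta>))"
proof -
  define y where "y = x tsharp"
  define u where "u = grad f y /\<^sub>R norm (grad f y)"
  define v where "v = grad g y /\<^sub>R norm (grad g y)"
  have "y \<in> E_set f g" and velocity: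
    "(x has_vector_derivative s_field f g \<zeta> y) (at tsharp within {0..tsharp})"
    using sol tpos unfolding y_def by auto
  then have "norm u = 1" and "norm v = 1" and "grad g y = norm (grad g y) *\<^sub>R v"
    unfolding E_set_def u_def v_def by auto
  have "g differentiable (at y)" and "\<forall>t\<in>{0..<tsharp}. g (x t) \<le> g y"
    using A4(2) first hit unfolding C2_def y_def by auto
  from inner_grad_velocity_nonneg_at_first_hit[OF tpos _ velocity] this
  have "0 \<le> s_field f g \<zeta> y \<bullet> grad g y"
    unfolding y_def by blast
  also have "\<dots> = norm (grad g y) * ((- u - \<zeta> *\<^sub>R v) \<bullet> v)"
    by (subst \<open>grad g y = norm (grad g y) *\<^sub>R v\<close>) (simp add: s_field_def u_def v_def)
  finally have "0 \<le> (- u - \<zeta> *\<^sub>R v) \<bullet> v"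
    using \<open>y \<in> E_set f g\<close> by (simp add: E_set_def zero_le_mult_iff)
  with \<open>norm u = 1\<close> \<open>norm v = 1\<close> show ?thesis
    unfolding eps_err_def u_def v_def y_def by (rule norm_add_unit_vectors_le)
qed

end
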